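(* Let $X$ be a topological space and $\mathcal A,\mathcal B\subseteq\wp(X)$. Then the games $G_1(\Omega_{C_{\mathcal A}(X),\mathbf 0},\Omega_{C_{\mathcal B}(X),\mathbf 0})$ and $G_1(\mathscr N_{C_{\mathcal A}(X)}(\mathbf 0),\neg\Omega_{C_{\mathcal B}(X),\mathbf 0})$ are dual.
   Context: $C_{\mathcal A}(X)$ is the set of continuous $f:X\to\mathbb R$ with the topology generated by the sets $[f;A,\varepsilon]=\{g:\sup_{x\in A}|f(x)-g(x)|<\varepsilon\}$, $A\in\mathcal A$, $\varepsilon>0$; similarly $C_{\mathcal B}(X)$ (same underlying set). $\mathbf 0$ is the zero function. For a space $Y$ and $y\in Y$, $\Omega_{Y,y}=\{S\subseteq Y:y\in\mathrm{cl}_Y(S)\}$ and $\mathscr N_Y(y)$ is the set of open neighbourhoods of $y$. In $G_1(\mathcal E,\mathcal C)$, at each inning $n\in\omega$ One plays $E_n\in\mathcal E$ and Two picks $x_n\in E_n$; Two wins iff $\{x_n:n\in\omega\}\in\mathcal C$; $\neg\mathcal C$ is the complement of $\mathcal C$. A strategy for One maps finite sequences of Two's moves to moves; predetermined if it depends only on the inning number. A strategy for Two maps finite sequences of One's moves to an element of the last one; Markov if it depends only on One's last move and the inning number. $G,H$ are dual if: One has a winning strategy in $G$ iff Two has one in $H$; One has one in $H$ iff Two has one in $G$; One has a winning predetermined strategy in $G$ iff Two has a winning Markov strategy in $H$; One has a winning predetermined strategy in $H$ iff Two has a winning Markov strategy in $G$. *)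

theory Defs
  imports "HOL-Analysis.Analysis"
begin

text \<open>Continuous real functions on X, represented extensionally (value 0 off topspace X).\<close>
definition Cfun :: "'x topology \<Rightarrow> ('x \<Rightarrow> real) set" where
  "Cfun X = {f. continuous_map X euclideanreal f \<and> (\<forall>x. x \<notin> topspace X \<longrightarrow> f x = 0)}"

text \<open>[f;A,eps] = {g. sup over A of |f - g| < eps}.\<close>
definition bracket :: "'x topology \<Rightarrow> ('x \<Rightarrow> real) \<Rightarrow> 'x set \<Rightarrow> real \<Rightarrow> ('x \<Rightarrow> real) set" where
  "bracket X f A \<epsilon> = {g \<in> Cfun X. \<exists>\<delta>. \<delta> < \<epsilon> \<and> (\<forall>x\<in>A. \<bar>f x - g x\<bar> \<le> \<delta>)}"

text \<open>C_A(X): the topology on Cfun X generated (as a subbase) by the sets [f;A,eps].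
  The whole carrier is added so that the topspace is Cfun X even when the family is empty.\<close>
definition C_top :: "'x topology \<Rightarrow> 'x set set \<Rightarrow> ('x \<Rightarrow> real) topology" where
  "C_top X \<A> = topology_generated_by
     (insert (Cfun X) {bracket X f A \<epsilon> | f A \<epsilon>. f \<in> Cfun X \<and> A \<in> \<A> \<and> \<epsilon> > 0})"

definition Omega :: "'b topology \<Rightarrow> 'b \<Rightarrow> 'b set set" where
  "Omega Y y = {S. S \<subseteq> topspace Y \<and> y \<in> Y closure_of S}"

definition Nbhds :: "'b topology \<Rightarrow> 'b \<Rightarrow> 'b set set" where
  "Nbhds Y y = {U. openin Y U \<and> y \<in> U}"

text \<open>A game G_1(E,C) is represented by the pair (E, C).\<close>

definition one_wins :: "'b set set \<times> 'b set set \<Rightarrow> ('b list \<Rightarrow> 'b set) \<Rightarrow> bool" where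
  "one_wins G \<sigma> \<longleftrightarrow> (\<forall>s. \<sigma> s \<in> fst G) \<and>
     (\<forall>x::nat \<Rightarrow> 'b. (\<forall>n. x n \<in> \<sigma> (map x [0..<n])) \<longrightarrow> range x \<notin> snd G)"

definition one_has_ws :: "'b set set \<times> 'b set set \<Rightarrow> bool" where
  "one_has_ws G \<longleftrightarrow> (\<exists>\<sigma>. one_wins G \<sigma>)"

definition one_has_ws_pre :: "'b set set \<times> 'b set set \<Rightarrow> bool" where
  "one_has_ws_pre G \<longleftrightarrow> (\<exists>E::nat \<Rightarrow> 'b set. (\<forall>n. E n \<in> fst G) \<and>
     (\<forall>x::nat \<Rightarrow> 'b. (\<forall>n. x n \<in> E n) \<longrightarrow> range x \<notin> snd G))"

definition two_wins :: "'b set set \<times> 'b set set \<Rightarrow> ('b set list \<Rightarrow> 'b) \<Rightarrow> bool" where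
  "two_wins G \<tau> \<longleftrightarrow> (\<forall>s. s \<noteq> [] \<and> set s \<subseteq> fst G \<longrightarrow> \<tau> s \<in> last s) \<and>
     (\<forall>E::nat \<Rightarrow> 'b set. (\<forall>n. E n \<in> fst G) \<longrightarrow>
        range (\<lambda>n. \<tau> (map E [0..<Suc n])) \<in> snd G)"

definition two_has_ws :: "'b set set \<times> 'b set set \<Rightarrow> bool" where
  "two_has_ws G \<longleftrightarrow> (\<exists>\<tau>. two_wins G \<tau>)"

definition two_has_ws_markov :: "'b set set \<times> 'b set set \<Rightarrow> bool" where
  "two_has_ws_markov G \<longleftrightarrow> (\<exists>\<tau>::nat \<Rightarrow> 'b set \<Rightarrow> 'b.
     (\<forall>n E. E \<in> fst G \<longrightarrow> \<tau> n E \<in> E) \<and>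
     (\<forall>E::nat \<Rightarrow> 'b set. (\<forall>n. E n \<in> fst G) \<longrightarrow> range (\<lambda>n. \<tau> n (E n)) \<in> snd G))"

definition dual_games :: "'b set set \<times> 'b set set \<Rightarrow> 'b set set \<times> 'b set set \<Rightarrow> bool" where
  "dual_games G H \<longleftrightarrow>
     (one_has_ws G \<longleftrightarrow> two_has_ws H) \<and>
     (one_has_ws H \<longleftrightarrow> two_has_ws G) \<and>
     (one_has_ws_pre G \<longleftrightarrow> two_has_ws_markov H) \<and>
     (one_has_ws_pre H \<longleftrightarrow> two_has_ws_markov G)"

end

theory Submission
  imports Defs
begin

text \<open>A set lies in \<open>\<Omega>\<^sub>y\<close> iff it meets every neighbourhood of \<open>y\<close>, so the range of any
  selection of \<open>\<N>(y)\<close> is in \<open>\<Omega>\<^sub>y\<close>, and every member of \<open>\<Omega>\<^sub>y\<close> meets every member of \<open>\<N>(y)\<close>.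
  Dually, the range of any selection \<open>f\<close> of \<open>\<Omega>\<^sub>y\<close> contains a neighbourhood of \<open>y\<close>: otherwise
  choosing in each neighbourhood a point outside that range gives a set in \<open>\<Omega>\<^sub>y\<close> from
  which \<open>f\<close> picks a point outside its own range.
  Hence a winning strategy of One in either game becomes one for Two in the other: Two
  answers each move with a point that also lies in One's simulated move. Conversely, One
  exploits a winning strategy of Two in the other game by playing (a set inside) the range
  of its possible replies, recovering the simulated history from the points Two picks.
  Nothing about \<open>C\<^sub>\<A>(X)\<close> is used except that \<open>\<zero>\<close> is one of its points, and the
  winning family may be arbitrary.\<close>

definition selection_ranges_contain :: "'b set set \<Rightarrow> 'b set set \<Rightarrow> bool" where
  "selection_ranges_contain F E \<longleftrightarrow> (\<forall>g. (\<forall>A\<in>F. g A \<in> A) \<longrightarrow> (\<exists>S\<in>E. S \<subseteq> g ` F))"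

lemma selection_ranges_containD:
  "selection_ranges_contain F E \<Longrightarrow> (\<And>A. A \<in> F \<Longrightarrow> g A \<in> A) \<Longrightarrow> \<exists>S\<in>E. S \<subseteq> g ` F"
  unfolding selection_ranges_contain_def by blast

definition simulated_replies :: "('b list \<Rightarrow> 'b set) \<Rightarrow> 'b set list \<Rightarrow> 'b list" where
  "simulated_replies \<sigma> = foldl (\<lambda>xs U. xs @ [SOME x. x \<in> \<sigma> xs \<inter> U]) []"

lemma simulated_replies_Nil [simp]: "simulated_replies \<sigma> [] = []"
  by (simp add: simulated_replies_def)

lemma simulated_replies_snoc [simp]:
  "simulated_replies \<sigma> (Us @ [U]) =
     simulated_replies \<sigma> Us @ [SOME x. x \<in> \<sigma> (simulated_replies \<sigma> Us) \<inter> U]"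
  by (simp add: simulated_replies_def)

lemma one_has_ws_imp_two_has_ws_compl:
  assumes meet: "\<And>S U. S \<in> E \<Longrightarrow> U \<in> F \<Longrightarrow> S \<inter> U \<noteq> {}"
    and "one_has_ws (E, C)"
  shows "two_has_ws (F, - C)"
proof -
  obtain \<sigma> where \<sigma>_E: "\<forall>xs. \<sigma> xs \<in> E"
    and \<sigma>_wins: "\<forall>x. (\<forall>n. x n \<in> \<sigma> (map x [0..<n])) \<longrightarrow> range x \<notin> C"
    using assms(2) unfolding one_has_ws_def one_wins_def by auto
  define \<tau> where "\<tau> Us = last (simulated_replies \<sigma> Us)" for Us
  have \<tau>_snoc: "\<tau> (Us @ [U]) = (SOME x. x \<in> \<sigma> (simulated_replies \<sigma> Us) \<inter> U)" for Us U
    by (simp add: \<tau>_def)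
  have pick: "(SOME x. x \<in> \<sigma> xs \<inter> U) \<in> \<sigma> xs \<inter> U" if "U \<in> F" for xs U
    unfolding some_in_eq using meet \<sigma>_E that by blast
  have legal: "\<tau> Us \<in> last Us" if "Us \<noteq> []" "set Us \<subseteq> F" for Us
    using that pick by (cases Us rule: rev_cases) (auto simp: \<tau>_snoc)
  have "range (\<lambda>n. \<tau> (map U [0..<Suc n])) \<in> - C" if U: "\<forall>n. U n \<in> F" for U
  proof -
    define x where "x n = \<tau> (map U [0..<Suc n])" for n
    have x_eq: "x n = (SOME y. y \<in> \<sigma> (simulated_replies \<sigma> (map U [0..<n])) \<inter> U n)" for n
      by (simp add: x_def \<tau>_snoc)
    have replies: "simulated_replies \<sigma> (map U [0..<n]) = map x [0..<n]" for n
      by (induction n) (simp_all add: x_eq)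
    have "x n \<in> \<sigma> (map x [0..<n])" for n
      using pick[OF U[rule_format, of n]] by (simp add: x_eq replies)
    then have "range x \<notin> C"
      using \<sigma>_wins by blast
    then show ?thesis
      by (simp add: x_def)
  qed
  then show ?thesis
    using legal unfolding two_has_ws_def two_wins_def by auto
qed

lemma one_has_ws_pre_imp_two_has_ws_markov_compl:
  assumes meet: "\<And>S U. S \<in> E \<Longrightarrow> U \<in> F \<Longrightarrow> S \<inter> U \<noteq> {}"
    and "one_has_ws_pre (E, C)"
  shows "two_has_ws_markov (F, - C)"
proof -
  obtain Es :: "nat \<Rightarrow> _" where Es_E: "\<forall>n. Es n \<in> E"
    and Es_wins: "\<forall>x. (\<forall>n. x n \<in> Es n) \<longrightarrow> range x \<notin> C"
    using assms(2) unfolding one_has_ws_pre_def by auto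
  define \<tau> where "\<tau> n U = (SOME x. x \<in> Es n \<inter> U)" for n U
  have pick: "\<tau> n U \<in> Es n \<inter> U" if "U \<in> F" for n U
    unfolding \<tau>_def some_in_eq using meet Es_E that by blast
  then have "range (\<lambda>n. \<tau> n (U n)) \<in> - C" if "\<forall>n. U n \<in> F" for U
    using that Es_wins[rule_format, of "\<lambda>n. \<tau> n (U n)"] by simp
  then show ?thesis
    using pick unfolding two_has_ws_markov_def by auto
qed

text \<open>The second disjunct only makes the choice land in \<open>F\<close> when \<open>x\<close> is not a reply of \<open>\<tau>\<close>.\<close>

definition preimage_move :: "('b set list \<Rightarrow> 'b) \<Rightarrow> 'b set set \<Rightarrow> 'b set list \<Rightarrow> 'b \<Rightarrow> 'b set" where
  "preimage_move \<tau> F As x = (SOME A. A \<in> F \<and> (\<tau> (As @ [A]) = x \<or> (\<forall>B\<in>F. \<tau> (As @ [B]) \<noteq> x)))"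

lemma preimage_move_in: "F \<noteq> {} \<Longrightarrow> preimage_move \<tau> F As x \<in> F"
  unfolding preimage_move_def by (rule someI2_ex) blast+

lemma preimage_move_eq:
  "A \<in> F \<Longrightarrow> \<tau> (As @ [A]) = x \<Longrightarrow> \<tau> (As @ [preimage_move \<tau> F As x]) = x"
  unfolding preimage_move_def by (rule someI2_ex) blast+

definition simulated_moves :: "('b set list \<Rightarrow> 'b) \<Rightarrow> 'b set set \<Rightarrow> 'b list \<Rightarrow> 'b set list" where
  "simulated_moves \<tau> F = foldl (\<lambda>As x. As @ [preimage_move \<tau> F As x]) []"

lemma simulated_moves_Nil [simp]: "simulated_moves \<tau> F [] = []"
  by (simp add: simulated_moves_def)

lemma simulated_moves_snoc [simp]:
  "simulated_moves \<tau> F (xs @ [x]) =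
     simulated_moves \<tau> F xs @ [preimage_move \<tau> F (simulated_moves \<tau> F xs) x]"
  by (simp add: simulated_moves_def)

lemma set_simulated_moves_subset: "F \<noteq> {} \<Longrightarrow> set (simulated_moves \<tau> F xs) \<subseteq> F"
  by (induction xs rule: rev_induct) (simp_all add: preimage_move_in)

lemma two_has_ws_imp_one_has_ws_compl:
  assumes "F \<noteq> {}" and cover: "selection_ranges_contain F E"
    and "two_has_ws (F, C)"
  shows "one_has_ws (E, - C)"
proof -
  obtain \<tau> where \<tau>_legal: "\<forall>As. As \<noteq> [] \<and> set As \<subseteq> F \<longrightarrow> \<tau> As \<in> last As"
    and \<tau>_wins: "\<forall>Es. (\<forall>n. Es n \<in> F) \<longrightarrow> range (\<lambda>n. \<tau> (map Es [0..<Suc n])) \<in> C"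
    using assms(3) unfolding two_has_ws_def two_wins_def by auto
  let ?hist = "simulated_moves \<tau> F"
  have "\<exists>S\<in>E. S \<subseteq> (\<lambda>A. \<tau> (?hist xs @ [A])) ` F" for xs
  proof (rule selection_ranges_containD[OF cover])
    fix A assume "A \<in> F"
    then show "\<tau> (?hist xs @ [A]) \<in> A"
      using \<tau>_legal[rule_format, of "?hist xs @ [A]"] set_simulated_moves_subset[OF \<open>F \<noteq> {}\<close>]
      by simp
  qed
  then obtain \<sigma> where \<sigma>_E: "\<forall>xs. \<sigma> xs \<in> E"
    and \<sigma>_replies: "\<forall>xs. \<sigma> xs \<subseteq> (\<lambda>A. \<tau> (?hist xs @ [A])) ` F"
    by metis
  have "range x \<notin> - C" if x: "\<forall>n. x n \<in> \<sigma> (map x [0..<n])" for x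
  proof -
    define Es where "Es n = preimage_move \<tau> F (?hist (map x [0..<n])) (x n)" for n
    have hist: "?hist (map x [0..<n]) = map Es [0..<n]" for n
    proof (induction n)
      case (Suc n)
      have "?hist (map x [0..<Suc n]) = ?hist (map x [0..<n]) @ [Es n]"
        by (simp only: upt_Suc_append map_append list.map simulated_moves_snoc Es_def)
      with Suc.IH show ?case
        by simp
    qed simp
    have "Es n \<in> F" for n
      unfolding Es_def using \<open>F \<noteq> {}\<close> by (rule preimage_move_in)
    moreover have "\<tau> (map Es [0..<Suc n]) = x n" for n
    proof -
      have "x n \<in> (\<lambda>A. \<tau> (?hist (map x [0..<n]) @ [A])) ` F"
        using subsetD[OF \<sigma>_replies[rule_format] x[rule_format]] .
      then obtain A where "x n = \<tau> (?hist (map x [0..<n]) @ [A])" and "A \<in> F"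
        by (rule imageE)
      then have "\<tau> (?hist (map x [0..<n]) @ [Es n]) = x n"
        unfolding Es_def by (intro preimage_move_eq) simp_all
      then show ?thesis
        by (simp add: hist)
    qed
    ultimately show ?thesis
      using \<tau>_wins[rule_format, of Es] by simp
  qed
  then show ?thesis
    using \<sigma>_E unfolding one_has_ws_def one_wins_def by auto
qed

lemma two_has_ws_markov_imp_one_has_ws_pre_compl:
  assumes cover: "selection_ranges_contain F E" and "two_has_ws_markov (F, C)"
  shows "one_has_ws_pre (E, - C)"
proof -
  obtain \<tau> :: "nat \<Rightarrow> _" where \<tau>_legal: "\<forall>n A. A \<in> F \<longrightarrow> \<tau> n A \<in> A"
    and \<tau>_wins: "\<forall>Us. (\<forall>n. Us n \<in> F) \<longrightarrow> range (\<lambda>n. \<tau> n (Us n)) \<in> C"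
    using assms(2) unfolding two_has_ws_markov_def by auto
  have "\<exists>S\<in>E. S \<subseteq> \<tau> n ` F" for n
    using \<tau>_legal by (intro selection_ranges_containD[OF cover]) simp
  then obtain Es where Es_E: "\<forall>n. Es n \<in> E" and Es_replies: "\<forall>n. Es n \<subseteq> \<tau> n ` F"
    by metis
  have "range x \<notin> - C" if "\<forall>n. x n \<in> Es n" for x
  proof -
    have "\<forall>n. \<exists>A\<in>F. x n = \<tau> n A"
      using that Es_replies by blast
    then obtain Us where "\<forall>n. Us n \<in> F" and "\<forall>n. x n = \<tau> n (Us n)"
      by metis
    then show ?thesis
      using \<tau>_wins by simp
  qed
  then show ?thesis
    using Es_E unfolding one_has_ws_pre_def by auto
qed

lemma dual_games_compl:
  assumes "E \<noteq> {}" and "F \<noteq> {}"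
    and meet: "\<And>S U. S \<in> E \<Longrightarrow> U \<in> F \<Longrightarrow> S \<inter> U \<noteq> {}"
    and "selection_ranges_contain E F" and "selection_ranges_contain F E"
  shows "dual_games (E, C) (F, - C)"
proof -
  have meet': "\<And>U S. U \<in> F \<Longrightarrow> S \<in> E \<Longrightarrow> U \<inter> S \<noteq> {}"
    using meet by blast
  show ?thesis
    unfolding dual_games_def
    using one_has_ws_imp_two_has_ws_compl[of E F, OF meet, of C]
      one_has_ws_imp_two_has_ws_compl[of F E, OF meet', of "- C"]
      two_has_ws_imp_one_has_ws_compl[of E F, OF assms(1,4), of C]
      two_has_ws_imp_one_has_ws_compl[of F E, OF assms(2,5), of "- C"]
      one_has_ws_pre_imp_two_has_ws_markov_compl[of E F, OF meet, of C]
      one_has_ws_pre_imp_two_has_ws_markov_compl[of F E, OF meet', of "- C"]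
      two_has_ws_markov_imp_one_has_ws_pre_compl[of E F, OF assms(4), of C]
      two_has_ws_markov_imp_one_has_ws_pre_compl[of F E, OF assms(5), of "- C"]
    by auto
qed

lemma Omega_iff:
  "S \<in> Omega Y y \<longleftrightarrow> S \<subseteq> topspace Y \<and> y \<in> topspace Y \<and> (\<forall>U\<in>Nbhds Y y. S \<inter> U \<noteq> {})"
  unfolding Omega_def Nbhds_def in_closure_of by blast

lemma Omega_Int_Nbhds_nonempty: "S \<in> Omega Y y \<Longrightarrow> U \<in> Nbhds Y y \<Longrightarrow> S \<inter> U \<noteq> {}"
  by (simp add: Omega_iff)

lemma image_Nbhds_in_Omega:
  assumes y: "y \<in> topspace Y" and g: "\<forall>U\<in>Nbhds Y y. g U \<in> U"
  shows "g ` Nbhds Y y \<in> Omega Y y"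
  unfolding Omega_iff
proof (intro conjI ballI subsetI y)
  show "z \<in> topspace Y" if "z \<in> g ` Nbhds Y y" for z
    using that g openin_subset by (force simp: Nbhds_def)
  show "g ` Nbhds Y y \<inter> U \<noteq> {}" if "U \<in> Nbhds Y y" for U
    using that g by blast
qed

lemma image_Omega_contains_Nbhd:
  assumes y: "y \<in> topspace Y" and f: "\<forall>S\<in>Omega Y y. f S \<in> S"
  shows "\<exists>U\<in>Nbhds Y y. U \<subseteq> f ` Omega Y y"
proof (rule ccontr)
  assume "\<not> ?thesis"
  then have "\<forall>U\<in>Nbhds Y y. \<exists>z. z \<in> U - f ` Omega Y y"
    by blast
  then obtain g where g: "\<forall>U\<in>Nbhds Y y. g U \<in> U - f ` Omega Y y"
    by (rule bchoice[THEN exE])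
  then have g_Omega: "g ` Nbhds Y y \<in> Omega Y y"
    by (intro image_Nbhds_in_Omega y) blast
  have "f (g ` Nbhds Y y) \<in> g ` Nbhds Y y"
    using f g_Omega by (rule bspec)
  then obtain U where "U \<in> Nbhds Y y" and "f (g ` Nbhds Y y) = g U"
    by (rule imageE) simp
  moreover have "f (g ` Nbhds Y y) \<in> f ` Omega Y y"
    using g_Omega by (rule imageI)
  ultimately show False
    using g by auto
qed

lemma dual_games_Omega_Nbhds:
  assumes "y \<in> topspace Y"
  shows "dual_games (Omega Y y, C) (Nbhds Y y, - C)"
proof (rule dual_games_compl)
  show "Omega Y y \<noteq> {}" and "Nbhds Y y \<noteq> {}"
    using assms by (auto simp: Omega_def Nbhds_def)
  show "selection_ranges_contain (Omega Y y) (Nbhds Y y)"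
    unfolding selection_ranges_contain_def by (intro allI impI image_Omega_contains_Nbhd assms)
  show "selection_ranges_contain (Nbhds Y y) (Omega Y y)"
    unfolding selection_ranges_contain_def by (intro allI impI bexI[OF _ image_Nbhds_in_Omega] assms) auto
qed (rule Omega_Int_Nbhds_nonempty)

theorem mainTheorem5:
  fixes X :: "'x topology" and \<A> \<B> :: "'x set set"
  assumes "\<A> \<subseteq> Pow (topspace X)" and "\<B> \<subseteq> Pow (topspace X)"
  shows "dual_games
           (Omega (C_top X \<A>) (\<lambda>_. 0), Omega (C_top X \<B>) (\<lambda>_. 0))
           (Nbhds (C_top X \<A>) (\<lambda>_. 0), - Omega (C_top X \<B>) (\<lambda>_. 0))"
proof (rule dual_games_Omega_Nbhds)
  show "(\<lambda>_. 0) \<in> topspace (C_top X \<A>)"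
    by (simp add: C_top_def Cfun_def)
qed

end
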